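(* Let $B$ be a nonzero real vector space and $\lfloor\cdot,\cdot\rfloor\colon B\times B\to\mathbb{R}$ a symmetric bilinear form, and put $q(b):=\tfrac12\lfloor b,b\rfloor$. Let $f\colon B\to\,]{-}\infty,\infty]$ be proper and convex with $f\ge q$ on $B$. Then $f^@=q$ on ${\cal P}_q(f)$.
   Context: Here $f^@$ is the Fenchel conjugate of $f$ with respect to $\lfloor\cdot,\cdot\rfloor$: $f^@(c):=\sup_{b\in B}\big[\lfloor b,c\rfloor-f(b)\big]$ for $c\in B$. For $f\ge q$, ${\cal P}_q(f):=\{b\in B\colon f(b)=q(b)\}$. "Proper" means $f$ is not identically $\infty$. *)

theory Defs
  imports "HOL-Analysis.Analysis"
begin

text \<open>Convexity of an extended-real valued function with values in ]-\<infinity>,\<infinity>]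
  (no value -\<infinity>, so the ereal arithmetic below is unambiguous).\<close>
definition ereal_convex_fun :: "('a::real_vector \<Rightarrow> ereal) \<Rightarrow> bool" where
  "ereal_convex_fun f \<longleftrightarrow>
     (\<forall>x y (t::real). 0 < t \<and> t < 1 \<longrightarrow>
        f (t *\<^sub>R x + (1 - t) *\<^sub>R y) \<le> ereal t * f x + ereal (1 - t) * f y)"

definition fenchel_conj :: "('a \<Rightarrow> 'a \<Rightarrow> real) \<Rightarrow> ('a \<Rightarrow> ereal) \<Rightarrow> 'a \<Rightarrow> ereal" where
  "fenchel_conj s f c = (SUP b. ereal (s b c) - f b)"

definition qform :: "('a \<Rightarrow> 'a \<Rightarrow> real) \<Rightarrow> 'a \<Rightarrow> real" where
  "qform s b = s b b / 2"

end

theory Submission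
  imports Defs
begin

text \<open>If \<open>f(b) = q(b)\<close>, comparing \<open>q \<le> f\<close> with convexity of \<open>f\<close> on the segment from \<open>b\<close>
  to any \<open>c\<close> and letting the segment shrink to \<open>b\<close> shows that the tangent
  \<open>c \<mapsto> \<lfloor>b,c\<rfloor> - q(b)\<close> of \<open>q\<close> at \<open>b\<close> minorizes \<open>f\<close>; hence \<open>f\<^sup>@(b) \<le> q(b)\<close>, and
  \<open>c = b\<close> attains this bound.\<close>

lemma qform_add:
  assumes "bilinear s" and "\<And>x y. s x y = s y x"
  shows "qform s (x + y) = qform s x + s x y + qform s y"
  using assms(2)[of y x]
  by (simp add: qform_def bilinear_ladd[OF assms(1)] bilinear_radd[OF assms(1)] field_simps)

lemma qform_scaleR:
  assumes "bilinear s"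
  shows "qform s (t *\<^sub>R x) = t\<^sup>2 * qform s x"
  by (simp add: qform_def bilinear_lmul[OF assms] bilinear_rmul[OF assms] power2_eq_square)

lemma nonneg_if_ge_small_multiples:
  fixes x K :: real
  assumes "\<And>t. 0 < t \<Longrightarrow> t < 1 \<Longrightarrow> t * K \<le> x"
  shows "0 \<le> x"
proof (rule tendsto_upperbound)
  show "((\<lambda>t. t * K) \<longlongrightarrow> 0) (at_right 0)"
    by (auto intro!: tendsto_eq_intros)
  show "\<forall>\<^sub>F t in at_right 0. t * K \<le> x"
    using eventually_at_right_real[of 0 1] by (rule eventually_mono) (use assms in auto)
qed simp

lemma tangent_of_qform_below:
  fixes s :: "'a::real_vector \<Rightarrow> 'a \<Rightarrow> real"
  assumes bil: "bilinear s" and sym: "\<And>x y. s x y = s y x"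
    and conv: "ereal_convex_fun f"
    and ge: "\<And>x. ereal (qform s x) \<le> f x"
    and touch: "f b = ereal (qform s b)"
  shows "ereal (s b c - qform s b) \<le> f c"
proof (cases "f c")
  case (real fc)
  have "t * (qform s c - s b c + qform s b) \<le> fc - (s b c - qform s b)"
    if t: "0 < t" "t < 1" for t
  proof -
    have "ereal (qform s (t *\<^sub>R c + (1 - t) *\<^sub>R b)) \<le> f (t *\<^sub>R c + (1 - t) *\<^sub>R b)"
      by (rule ge)
    also have "\<dots> \<le> ereal t * f c + ereal (1 - t) * f b"
      using conv t unfolding ereal_convex_fun_def by blast
    finally have "t\<^sup>2 * qform s c + t * (1 - t) * s b c + (1 - t)\<^sup>2 * qform s b
        \<le> t * fc + (1 - t) * qform s b"
      using real touch sym[of c b]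
      by (simp add: qform_add[OF bil sym] qform_scaleR[OF bil]
          bilinear_lmul[OF bil] bilinear_rmul[OF bil] mult_ac)
    \<comment> \<open>both sides vanish at \<open>t = 0\<close>; divide by \<open>t\<close>\<close>
    then have "t * (t * qform s c + (1 - t) * s b c - (1 - t) * qform s b) \<le> t * fc"
      by (simp add: power2_eq_square algebra_simps)
    then have "t * qform s c + (1 - t) * s b c - (1 - t) * qform s b \<le> fc"
      using t by simp
    then show ?thesis
      by (simp add: algebra_simps)
  qed
  then have "0 \<le> fc - (s b c - qform s b)"
    by (rule nonneg_if_ge_small_multiples)
  then show ?thesis
    using real by simp
qed (use ge[of c] in auto)

theorem lemma3p7:
  fixes s :: "'a::real_vector \<Rightarrow> 'a \<Rightarrow> real" and f :: "'a \<Rightarrow> ereal"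
  assumes nonzero: "\<exists>x::'a. x \<noteq> 0"
    and bil: "bilinear s"
    and sym: "\<And>x y. s x y = s y x"
    and nominf: "\<And>x. f x \<noteq> -\<infinity>"
    and proper: "\<exists>x. f x \<noteq> \<infinity>"
    and conv: "ereal_convex_fun f"
    and ge: "\<And>x. ereal (qform s x) \<le> f x"
  shows "\<forall>b \<in> {b. f b = ereal (qform s b)}. fenchel_conj s f b = ereal (qform s b)"
proof
  fix b assume "b \<in> {b. f b = ereal (qform s b)}"
  then have touch: "f b = ereal (qform s b)" by simp
  have "ereal (s c b) - f c \<le> ereal (qform s b)" for c
    using tangent_of_qform_below[OF bil sym conv ge touch, of c] ge[of c] sym[of c b]
    by (cases "f c") auto
  then have "fenchel_conj s f b \<le> ereal (qform s b)"
    unfolding fenchel_conj_def by (rule SUP_least)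
  moreover have "ereal (s b b) - f b \<le> fenchel_conj s f b"
    unfolding fenchel_conj_def by (rule SUP_upper) simp
  moreover have "ereal (s b b) - f b = ereal (qform s b)"
    using touch by (simp add: qform_def)
  ultimately show "fenchel_conj s f b = ereal (qform s b)"
    by simp
qed

end
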